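(* Let $A\in\mathbb{R}^{n\times n}$ be nonsingular, $B\in\mathbb{R}^{n\times m}$, $N\geq1$ an integer, $\Omega=\{x\in\mathbb{R}^n: Hx\leq h\}$ bounded with $H\in\mathbb{R}^{n_h\times n}$, $X=\{y\in\mathbb{R}^n:Fy\leq f\}$ with $F\in\mathbb{R}^{n_f\times n}$, and $U=\{v\in\mathbb{R}^m: Gv\leq g\}$ bounded with $G\in\mathbb{R}^{n_g\times m}$; suppose $0\in\Omega$, $0\in X$, $0\in U$. Let $\bar G$, $\bar H$ be the matrices defined in the context, let $\hat g=(0,g,\dots,g,f,\dots,f)$ and $\tilde g=(h,0,\dots,0)$ (vectors of the same length as the number of rows of $\bar G$, partitioned like $\bar g$ in the context), let $\beta$ be the optimal value of the linear program $$\min_{\gamma\geq 0,\ T\geq 0,\ M}\ \gamma\quad\text{s.t.}\quad T\bar H=\bar G M,\quad Th\leq\gamma\hat g+\tilde g,\quad \begin{bmatrix}I&0&\cdots&0\end{bmatrix}=\begin{bmatrix}I&0&\cdots&0\end{bmatrix}M,$$ and let $\alpha=\beta^{-1}$. For $k\in\{1,\dots,N\}$ let $$\Omega_k^x=\Big\{x\in X:\ \exists\,u_1,\dots,u_k\in U \text{ with } A^kx+\sum_{i=0}^{k-1}A^{k-1-i}Bu_{k-i}\in\alpha\Omega,\ \ A^jx+\sum_{i=0}^{j-1}A^{j-1-i}Bu_{j-i}\in X\ \forall j\in\{1,\dots,k\}\Big\},$$ and $\bar\Omega^x=\mathrm{co}\big(\bigcup_{k=1}^N\Omega_k^x\big)$.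 Then $\bar\Omega^x$ equals the set of all $x\in\mathbb{R}^n$ for which there exist $z_1,\dots,z_N\in\mathbb{R}^n$, vectors $v_{k,i}\in\mathbb{R}^m$ ($k\in\{1,\dots,N\}$, $i\in\{1,\dots,k\}$) and $\lambda=(\lambda_1,\dots,\lambda_N)\in\mathbb{R}^N$ such that $x=\sum_{k=1}^N z_k$; $HA^kz_k+\sum_{i=0}^{k-1}HA^{k-1-i}Bv_{k,k-i}\leq\alpha\lambda_k h$ for all $k$; $FA^jz_k+\sum_{i=0}^{j-1}FA^{j-1-i}Bv_{k,j-i}\leq\lambda_k f$ for all $j\in\{1,\dots,k\}$ and all $k$; $Fz_k\leq\lambda_k f$ for all $k$; $Gv_{k,i}\leq\lambda_k g$ for all $i\in\{1,\dots,k\}$ and all $k$; $\lambda\geq0$ and $\sum_{k=1}^N\lambda_k=1$.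
   Context: Vector inequalities are componentwise; $T\geq0$ means entrywise nonnegative; $\mathrm{co}$ denotes convex hull. With $\bar n=n+Nm$, column blocks of widths $n,m,\dots,m$ (state block, then input blocks $i=1,\dots,N$): $\bar H=[H\ 0\ \cdots\ 0]\in\mathbb{R}^{n_h\times\bar n}$, and $\bar G$ has the block rows: $[HA^N\ \ HB\ \ HAB\ \cdots\ HA^{N-1}B]$; then for $i=1,\dots,N$ a block row with $G$ in input block $i$ and zeros elsewhere; then for $j=N,N-1,\dots,1$ a block row with $FA^j$ in the state block and $FA^{i-1-(N-j)}B$ in input block $i$ if $i\geq N-j+1$, $0$ otherwise; then the block row $[F\ 0\ \cdots\ 0]$. The vector $\bar g$ partitions accordingly as $(h,g,\dots,g,f,\dots,f)$ with $g$ repeated $N$ times and $f$ repeated $N+1$ times; $\hat g$ and $\tilde g$ use this partition. The matrix $\begin{bmatrix}I&0&\cdots&0\end{bmatrix}\in\mathbb{R}^{n\times\bar n}$ with $I$ the $n\times n$ identity; $M\in\mathbb{R}^{\bar n\times\bar n}$ and $T$ has as many rows as $\bar G$ and $n_h$ columns. It is implicitly assumed that $\beta>0$ so that $\alpha$ is defined. *)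

theory Defs
  imports "Jordan_Normal_Form.Matrix"
begin

definition vle :: "real vec \<Rightarrow> real vec \<Rightarrow> bool" where
  "vle u v \<longleftrightarrow> dim_vec u = dim_vec v \<and> (\<forall>i<dim_vec v. u $ i \<le> v $ i)"

definition mat_nonneg :: "real mat \<Rightarrow> bool" where
  "mat_nonneg T \<longleftrightarrow> (\<forall>i<dim_row T. \<forall>j<dim_col T. T $$ (i, j) \<ge> 0)"

definition vsum :: "nat \<Rightarrow> ('i \<Rightarrow> real vec) \<Rightarrow> 'i set \<Rightarrow> real vec" where
  "vsum n v I = vec n (\<lambda>r. \<Sum>i\<in>I. v i $ r)"

definition vbounded :: "real vec set \<Rightarrow> bool" where
  "vbounded S \<longleftrightarrow> (\<exists>R. \<forall>x\<in>S. \<forall>i<dim_vec x. \<bar>x $ i\<bar> \<le> R)"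

definition vconvex :: "real vec set \<Rightarrow> bool" where
  "vconvex S \<longleftrightarrow> (\<forall>x\<in>S. \<forall>y\<in>S. \<forall>u v. 0 \<le> u \<longrightarrow> 0 \<le> v \<longrightarrow> u + v = 1 \<longrightarrow>
      u \<cdot>\<^sub>v x + v \<cdot>\<^sub>v y \<in> S)"

definition polyh :: "real mat \<Rightarrow> real vec \<Rightarrow> real vec set" where
  "polyh P p = {x \<in> carrier_vec (dim_col P). vle (P *\<^sub>v x) p}"

definition hcat :: "real mat \<Rightarrow> real mat \<Rightarrow> real mat" where
  "hcat X Y = four_block_mat X Y (0\<^sub>m 0 (dim_col X)) (0\<^sub>m 0 (dim_col Y))"

definition vcat :: "real mat \<Rightarrow> real mat \<Rightarrow> real mat" where
  "vcat X Y = four_block_mat X (0\<^sub>m (dim_row X) 0) Y (0\<^sub>m (dim_row Y) 0)"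

definition hcat_list :: "nat \<Rightarrow> real mat list \<Rightarrow> real mat" where
  "hcat_list r Xs = foldr hcat Xs (0\<^sub>m r 0)"

definition vcat_list :: "nat \<Rightarrow> real mat list \<Rightarrow> real mat" where
  "vcat_list c Xs = foldr vcat Xs (0\<^sub>m 0 c)"

definition vconcat :: "real vec list \<Rightarrow> real vec" where
  "vconcat vs = foldr (@\<^sub>v) vs (0\<^sub>v 0)"

definition Gbar :: "real mat \<Rightarrow> real mat \<Rightarrow> real mat \<Rightarrow> real mat \<Rightarrow> real mat \<Rightarrow> nat \<Rightarrow> real mat" where
  "Gbar A B H F G N =
    (let n = dim_row A; m = dim_col B; nh = dim_row H; nf = dim_row F; ng = dim_row G;
         row0 = hcat_list nh (H * (A ^\<^sub>m N) # map (\<lambda>l. H * (A ^\<^sub>m (l - 1)) * B) [1..<N+1]);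
         growi = (\<lambda>i. hcat_list ng (0\<^sub>m ng n # map (\<lambda>l. if l = i then G else 0\<^sub>m ng m) [1..<N+1]));
         frowj = (\<lambda>j. hcat_list nf (F * (A ^\<^sub>m j) #
                    map (\<lambda>l. if l \<ge> N - j + 1 then F * (A ^\<^sub>m (l - 1 - (N - j))) * B else 0\<^sub>m nf m)
                      [1..<N+1]));
         flast = hcat_list nf (F # map (\<lambda>l. 0\<^sub>m nf m) [1..<N+1])
     in vcat_list (n + N * m) (row0 # map growi [1..<N+1] @ map frowj (rev [1..<N+1]) @ [flast]))"

definition Hbar :: "real mat \<Rightarrow> real mat \<Rightarrow> real mat \<Rightarrow> nat \<Rightarrow> real mat" where
  "Hbar A B H N = hcat_list (dim_row H) (H # map (\<lambda>l. 0\<^sub>m (dim_row H) (dim_col B)) [1..<N+1])"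

definition Ebar :: "real mat \<Rightarrow> real mat \<Rightarrow> nat \<Rightarrow> real mat" where
  "Ebar A B N = hcat_list (dim_row A) (1\<^sub>m (dim_row A) # map (\<lambda>l. 0\<^sub>m (dim_row A) (dim_col B)) [1..<N+1])"

definition ghat :: "real vec \<Rightarrow> real vec \<Rightarrow> real vec \<Rightarrow> nat \<Rightarrow> real vec" where
  "ghat h g f N = vconcat (0\<^sub>v (dim_vec h) # replicate N g @ replicate (N+1) f)"

definition gtilde :: "real vec \<Rightarrow> real vec \<Rightarrow> real vec \<Rightarrow> nat \<Rightarrow> real vec" where
  "gtilde h g f N = vconcat (h # replicate N (0\<^sub>v (dim_vec g)) @ replicate (N+1) (0\<^sub>v (dim_vec f)))"

definition lp_feasible :: "real mat \<Rightarrow> real mat \<Rightarrow> real mat \<Rightarrow> real vec \<Rightarrow> real mat \<Rightarrow> real vec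
    \<Rightarrow> real mat \<Rightarrow> real vec \<Rightarrow> nat \<Rightarrow> real set" where
  "lp_feasible A B H h F f G g N =
    {\<gamma>. \<gamma> \<ge> 0 \<and> (\<exists>T M.
        T \<in> carrier_mat (dim_row (Gbar A B H F G N)) (dim_row H) \<and> mat_nonneg T \<and>
        M \<in> carrier_mat (dim_row A + N * dim_col B) (dim_row A + N * dim_col B) \<and>
        T * Hbar A B H N = Gbar A B H F G N * M \<and>
        vle (T *\<^sub>v h) (\<gamma> \<cdot>\<^sub>v ghat h g f N + gtilde h g f N) \<and>
        Ebar A B N = Ebar A B N * M)}"

definition traj :: "real mat \<Rightarrow> real mat \<Rightarrow> real vec \<Rightarrow> (nat \<Rightarrow> real vec) \<Rightarrow> nat \<Rightarrow> real vec" where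
  "traj A B x u j = (A ^\<^sub>m j) *\<^sub>v x +
     vsum (dim_row A) (\<lambda>i. (A ^\<^sub>m (j - 1 - i)) *\<^sub>v (B *\<^sub>v u (j - i))) {0..<j}"

definition Omega_k :: "real mat \<Rightarrow> real mat \<Rightarrow> real mat \<Rightarrow> real vec \<Rightarrow> real mat \<Rightarrow> real vec
    \<Rightarrow> real mat \<Rightarrow> real vec \<Rightarrow> real \<Rightarrow> nat \<Rightarrow> real vec set" where
  "Omega_k A B H h F f G g \<alpha> k =
    {x \<in> polyh F f. \<exists>u. (\<forall>i\<in>{1..k}. u i \<in> polyh G g) \<and>
        traj A B x u k \<in> (\<lambda>w. \<alpha> \<cdot>\<^sub>v w) ` polyh H h \<and>
        (\<forall>j\<in>{1..k}. traj A B x u j \<in> polyh F f)}"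

end

theory Submission
  imports Defs
begin

text \<open>
  Homogenise each set \<open>\<Omega>\<^sub>k\<^sup>x\<close>: \<open>(\<lambda>, z)\<close> lies in the cone \<open>C\<^sub>k\<close> iff some input sequence
  \<open>v\<^sub>k\<close> satisfies the \<open>k\<close>-th block of constraints of the theorem, i.e. iff \<open>z \<in> \<lambda> \<Omega>\<^sub>k\<^sup>x\<close> when
  \<open>\<lambda> > 0\<close>. Linearity of the dynamics makes \<open>C\<^sub>k\<close> a convex cone, and its slice \<open>\<lambda> = 0\<close> is
  \<open>{0}\<close> because \<open>\<Omega>\<close> and \<open>U\<close> are bounded and \<open>A\<close> is invertible. For any finite family of
  such cones, the convex hull of the union of the slices \<open>\<lambda> = 1\<close> is the set of sums
  \<open>\<Sum>\<^sub>k z\<^sub>k\<close> with \<open>(\<lambda>\<^sub>k, z\<^sub>k) \<in> C\<^sub>k\<close> and \<open>\<lambda>\<close> in the simplex (Balas): that set is convex and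
  contains each slice, and conversely \<open>\<Sum>\<^sub>k z\<^sub>k\<close> is the convex combination of the points
  \<open>z\<^sub>k / \<lambda>\<^sub>k\<close> over \<open>\<lambda>\<^sub>k > 0\<close>, the other summands being \<open>0\<close>.
\<close>

section \<open>Finite sums and linear combinations of vectors\<close>

lemma vsum_carrier [simp]: "vsum n v I \<in> carrier_vec n"
  by (simp add: vsum_def)

lemma dim_vsum [simp]: "dim_vec (vsum n v I) = n"
  by (simp add: vsum_def)

lemma index_vsum [simp]: "r < n \<Longrightarrow> vsum n v I $ r = (\<Sum>i\<in>I. v i $ r)"
  by (simp add: vsum_def)

lemma vsum_cong: "(\<And>i. i \<in> I \<Longrightarrow> v i = w i) \<Longrightarrow> vsum n v I = vsum n w I"
  unfolding vsum_def by (intro eq_vecI) auto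

lemma index_lincomb_vec [simp]:
  "x \<in> carrier_vec n \<Longrightarrow> y \<in> carrier_vec n \<Longrightarrow> r < n \<Longrightarrow>
    (a \<cdot>\<^sub>v x + b \<cdot>\<^sub>v y) $ r = a * x $ r + b * y $ r"
  by (simp add: carrier_vecD)

lemma vsum_lincomb:
  assumes "\<forall>i\<in>I. v i \<in> carrier_vec n" "\<forall>i\<in>I. w i \<in> carrier_vec n"
  shows "vsum n (\<lambda>i. a \<cdot>\<^sub>v v i + b \<cdot>\<^sub>v w i) I = a \<cdot>\<^sub>v vsum n v I + b \<cdot>\<^sub>v vsum n w I"
proof (rule eq_vecI)
  fix r assume "r < dim_vec (a \<cdot>\<^sub>v vsum n v I + b \<cdot>\<^sub>v vsum n w I)"
  then have r: "r < n" by simp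
  have "vsum n (\<lambda>i. a \<cdot>\<^sub>v v i + b \<cdot>\<^sub>v w i) I $ r = (\<Sum>i\<in>I. a * v i $ r + b * w i $ r)"
    using assms r by (simp, intro sum.cong) auto
  then show "vsum n (\<lambda>i. a \<cdot>\<^sub>v v i + b \<cdot>\<^sub>v w i) I $ r = (a \<cdot>\<^sub>v vsum n v I + b \<cdot>\<^sub>v vsum n w I) $ r"
    using r by (simp add: sum.distrib sum_distrib_left)
qed simp

lemma vsum_smult:
  assumes "\<forall>i\<in>I. v i \<in> carrier_vec n"
  shows "vsum n (\<lambda>i. c \<cdot>\<^sub>v v i) I = c \<cdot>\<^sub>v vsum n v I"
  using assms by (intro eq_vecI) (auto simp: sum_distrib_left intro!: sum.cong)

lemma vsum_insert:
  assumes "finite I" "i \<notin> I" "v i \<in> carrier_vec n"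
  shows "vsum n v (insert i I) = v i + vsum n v I"
  using assms by (intro eq_vecI) auto

lemma vsum_mono_neutral:
  assumes "finite I" "K \<subseteq> I" "\<forall>i\<in>I - K. v i = 0\<^sub>v n"
  shows "vsum n v I = vsum n v K"
  using assms by (intro eq_vecI) (auto intro!: sum.mono_neutral_right)

lemma vsum_delta:
  assumes "finite I" "k \<in> I" "x \<in> carrier_vec n"
  shows "vsum n (\<lambda>i. if i = k then x else 0\<^sub>v n) I = x"
proof (rule eq_vecI)
  fix r assume "r < dim_vec x"
  then have "(if i = k then x else 0\<^sub>v n) $ r = (if i = k then x $ r else 0)" for i
    using assms(3) by simp
  then show "vsum n (\<lambda>i. if i = k then x else 0\<^sub>v n) I $ r = x $ r"
    using assms \<open>r < dim_vec x\<close> by simp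
qed (use assms in simp)

lemma mult_mat_vec_zero [simp]: "M \<in> carrier_mat r c \<Longrightarrow> M *\<^sub>v 0\<^sub>v c = 0\<^sub>v r"
  by (intro eq_vecI) (auto simp: mult_mat_vec_def scalar_prod_def)

lemma mult_mat_vec_lincomb:
  fixes M :: "real mat"
  assumes "x \<in> carrier_vec (dim_col M)" "y \<in> carrier_vec (dim_col M)"
  shows "M *\<^sub>v (a \<cdot>\<^sub>v x + b \<cdot>\<^sub>v y) = a \<cdot>\<^sub>v (M *\<^sub>v x) + b \<cdot>\<^sub>v (M *\<^sub>v y)"
  using assms
  by (simp add: mult_add_distrib_mat_vec[OF carrier_mat_triv] mult_mat_vec[OF carrier_mat_triv])

lemma mult_mat_vec_vsum:
  fixes M :: "real mat"
  assumes M: "M \<in> carrier_mat r c" and v: "\<forall>i\<in>I. v i \<in> carrier_vec c"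
  shows "M *\<^sub>v vsum c v I = vsum r (\<lambda>i. M *\<^sub>v v i) I"
proof (rule eq_vecI)
  fix k assume "k < dim_vec (vsum r (\<lambda>i. M *\<^sub>v v i) I)"
  then have k: "k < r" by simp
  have "(M *\<^sub>v vsum c v I) $ k = (\<Sum>j<c. M $$ (k, j) * (\<Sum>i\<in>I. v i $ j))"
    using M k by (simp add: mult_mat_vec_def scalar_prod_def lessThan_atLeast0)
  also have "\<dots> = (\<Sum>i\<in>I. \<Sum>j<c. M $$ (k, j) * v i $ j)"
    by (simp add: sum_distrib_left sum.swap[of _ I])
  also have "\<dots> = vsum r (\<lambda>i. M *\<^sub>v v i) I $ k"
    using M k v by (auto simp: mult_mat_vec_def scalar_prod_def lessThan_atLeast0 intro!: sum.cong)
  finally show "(M *\<^sub>v vsum c v I) $ k = vsum r (\<lambda>i. M *\<^sub>v v i) I $ k" .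
qed (use M in simp)

lemma vle_lincomb:
  assumes "vle p q" "vle p' q'" "dim_vec q = dim_vec q'" "0 \<le> a" "0 \<le> b"
  shows "vle (a \<cdot>\<^sub>v p + b \<cdot>\<^sub>v p') (a \<cdot>\<^sub>v q + b \<cdot>\<^sub>v q')"
  using assms unfolding vle_def by (auto intro!: add_mono mult_left_mono)

section \<open>Convex hull of a union of slices of pointed cones\<close>

lemma vconvex_Inter: "\<forall>S\<in>\<S>. vconvex S \<Longrightarrow> vconvex (\<Inter>\<S>)"
  unfolding vconvex_def by blast

lemma vconvex_vconvex_hull: "vconvex (vconvex hull S)"
  by (rule hull_in) (simp add: vconvex_Inter)

lemma vconvex_vsum:
  assumes "vconvex S" "finite K" "K \<noteq> {}"
    and "\<forall>k\<in>K. y k \<in> S \<and> y k \<in> carrier_vec n" "\<forall>k\<in>K. 0 < lam k" "sum lam K = 1"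
  shows "vsum n (\<lambda>k. lam k \<cdot>\<^sub>v y k) K \<in> S"
  using assms(2-)
proof (induction K arbitrary: lam rule: finite_ne_induct)
  case (singleton a)
  then have "vsum n (\<lambda>k. lam k \<cdot>\<^sub>v y k) {a} = y a" by (intro eq_vecI) auto
  then show ?case using singleton by simp
next
  case (insert a K)
  define t where "t = sum lam K"
  have "0 < t" using insert by (simp add: t_def sum_pos)
  have "vsum n (\<lambda>k. (lam k / t) \<cdot>\<^sub>v y k) K \<in> S"
    using insert \<open>0 < t\<close> by (intro insert.IH) (auto simp: t_def simp flip: sum_divide_distrib)
  moreover have "lam a + t = 1" using insert by (simp add: t_def)
  ultimately have "lam a \<cdot>\<^sub>v y a + t \<cdot>\<^sub>v vsum n (\<lambda>k. (lam k / t) \<cdot>\<^sub>v y k) K \<in> S"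
    using \<open>vconvex S\<close> insert \<open>0 < t\<close> unfolding vconvex_def by simp
  moreover have "t \<cdot>\<^sub>v vsum n (\<lambda>k. (lam k / t) \<cdot>\<^sub>v y k) K = vsum n (\<lambda>k. lam k \<cdot>\<^sub>v y k) K"
    using insert \<open>0 < t\<close> by (subst vsum_smult[symmetric]) (auto intro!: vsum_cong)
  ultimately show ?case using insert by (simp add: vsum_insert)
qed

locale vcone_family =
  fixes n :: nat and C :: "'i \<Rightarrow> (real \<times> real vec) set" and I :: "'i set"
  assumes finite_index: "finite I"
    and cone_carrier: "k \<in> I \<Longrightarrow> (l, z) \<in> C k \<Longrightarrow> z \<in> carrier_vec n"
    and cone_origin: "k \<in> I \<Longrightarrow> (0, 0\<^sub>v n) \<in> C k"
    and cone_lincomb: "k \<in> I \<Longrightarrow> (l, z) \<in> C k \<Longrightarrow> (l', z') \<in> C k \<Longrightarrow> 0 \<le> a \<Longrightarrow> 0 \<le> b \<Longrightarrow>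
      (a * l + b * l', a \<cdot>\<^sub>v z + b \<cdot>\<^sub>v z') \<in> C k"
    and cone_pointed: "k \<in> I \<Longrightarrow> (0, z) \<in> C k \<Longrightarrow> z = 0\<^sub>v n"
begin

definition slice :: "'i \<Rightarrow> real vec set" where
  "slice k = {x. (1, x) \<in> C k}"

definition cone_sums :: "real vec set" where
  "cone_sums = {x. \<exists>z lam. (\<forall>k\<in>I. (lam k, z k) \<in> C k) \<and> (\<forall>k\<in>I. 0 \<le> lam k) \<and>
     sum lam I = 1 \<and> x = vsum n z I}"

lemma cone_smult:
  assumes "k \<in> I" "(l, z) \<in> C k" "0 \<le> c"
  shows "(c * l, c \<cdot>\<^sub>v z) \<in> C k"
proof -
  have "z \<in> carrier_vec n" using cone_carrier assms(1,2) .
  then have "c \<cdot>\<^sub>v z + 0 \<cdot>\<^sub>v 0\<^sub>v n = c \<cdot>\<^sub>v z" by (intro eq_vecI) auto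
  then show ?thesis
    using cone_lincomb[OF assms(1,2) cone_origin[OF assms(1)] assms(3) order_refl] by simp
qed

lemma cone_sums_vconvex: "vconvex cone_sums"
  unfolding vconvex_def
proof (intro ballI allI impI)
  fix x y and a b :: real
  assume "x \<in> cone_sums" "y \<in> cone_sums" and ab: "0 \<le> a" "0 \<le> b" "a + b = 1"
  then obtain z lam z' lam' where
    x: "\<forall>k\<in>I. (lam k, z k) \<in> C k" "\<forall>k\<in>I. 0 \<le> lam k" "sum lam I = 1" "x = vsum n z I" and
    y: "\<forall>k\<in>I. (lam' k, z' k) \<in> C k" "\<forall>k\<in>I. 0 \<le> lam' k" "sum lam' I = 1" "y = vsum n z' I"
    unfolding cone_sums_def by blast
  have "\<forall>k\<in>I. (a * lam k + b * lam' k, a \<cdot>\<^sub>v z k + b \<cdot>\<^sub>v z' k) \<in> C k"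
    using x(1) y(1) ab by (blast intro: cone_lincomb)
  moreover have "\<forall>k\<in>I. 0 \<le> a * lam k + b * lam' k"
    using x(2) y(2) ab by simp
  moreover have "(\<Sum>k\<in>I. a * lam k + b * lam' k) = 1"
    using x(3) y(3) ab by (simp add: sum.distrib flip: sum_distrib_left)
  moreover have "a \<cdot>\<^sub>v x + b \<cdot>\<^sub>v y = vsum n (\<lambda>k. a \<cdot>\<^sub>v z k + b \<cdot>\<^sub>v z' k) I"
    using x(1,4) y(1,4) cone_carrier by (subst vsum_lincomb) auto
  ultimately show "a \<cdot>\<^sub>v x + b \<cdot>\<^sub>v y \<in> cone_sums"
    unfolding cone_sums_def mem_Collect_eq
    by (intro exI[of _ "\<lambda>k. a \<cdot>\<^sub>v z k + b \<cdot>\<^sub>v z' k"] exI[of _ "\<lambda>k. a * lam k + b * lam' k"]) simp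
qed

lemma slice_subset_cone_sums:
  assumes "k \<in> I"
  shows "slice k \<subseteq> cone_sums"
proof
  fix x assume "x \<in> slice k"
  then have "(1, x) \<in> C k" by (simp add: slice_def)
  define z where "z = (\<lambda>i. if i = k then x else 0\<^sub>v n)"
  define lam where "lam = (\<lambda>i. if i = k then 1 else 0 :: real)"
  have "\<forall>i\<in>I. (lam i, z i) \<in> C i"
    using \<open>(1, x) \<in> C k\<close> cone_origin by (simp add: z_def lam_def)
  moreover have "sum lam I = 1"
    using assms finite_index by (simp add: lam_def)
  moreover have "x = vsum n z I"
    using vsum_delta[OF finite_index assms] cone_carrier[OF assms \<open>(1, x) \<in> C k\<close>]
    by (simp add: z_def)
  moreover have "\<forall>i\<in>I. 0 \<le> lam i" by (simp add: lam_def)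
  ultimately show "x \<in> cone_sums"
    unfolding cone_sums_def by blast
qed

lemma cone_sums_subset_hull: "cone_sums \<subseteq> vconvex hull (\<Union>k\<in>I. slice k)"
proof
  fix x assume "x \<in> cone_sums"
  then obtain z lam where z: "\<forall>k\<in>I. (lam k, z k) \<in> C k" and
    lam: "\<forall>k\<in>I. 0 \<le> lam k" "sum lam I = 1" and x: "x = vsum n z I"
    unfolding cone_sums_def by blast
  define K where "K = {k \<in> I. 0 < lam k}"
  have "K \<subseteq> I" by (simp add: K_def)
  have lam0: "\<forall>k\<in>I - K. lam k = 0"
    using lam(1) by (auto simp: K_def)
  then have "sum lam K = 1"
    using lam(2) sum.mono_neutral_right[OF finite_index \<open>K \<subseteq> I\<close> lam0] by simp
  have "\<forall>k\<in>I - K. z k = 0\<^sub>v n"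
    using lam0 z cone_pointed by (metis DiffD1)
  then have "x = vsum n z K"
    using x vsum_mono_neutral[OF finite_index \<open>K \<subseteq> I\<close>] by simp
  also have "\<dots> = vsum n (\<lambda>k. lam k \<cdot>\<^sub>v ((1 / lam k) \<cdot>\<^sub>v z k)) K"
    using z cone_carrier by (intro vsum_cong eq_vecI) (auto simp: K_def)
  also have "\<dots> \<in> vconvex hull (\<Union>k\<in>I. slice k)"
  proof (rule vconvex_vsum[OF vconvex_vconvex_hull])
    show "finite K" using finite_index \<open>K \<subseteq> I\<close> by (rule finite_subset[rotated])
    show "K \<noteq> {}" using \<open>sum lam K = 1\<close> by auto
    show "\<forall>k\<in>K. 0 < lam k" by (simp add: K_def)
    have "(1 / lam k) \<cdot>\<^sub>v z k \<in> slice k" if "k \<in> K" for k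
      using cone_smult[of k "lam k" "z k" "1 / lam k"] z that by (simp add: K_def slice_def)
    moreover have "z k \<in> carrier_vec n" if "k \<in> K" for k
      using z cone_carrier \<open>K \<subseteq> I\<close> that by blast
    ultimately show "\<forall>k\<in>K. (1 / lam k) \<cdot>\<^sub>v z k \<in> vconvex hull (\<Union>k\<in>I. slice k) \<and>
        (1 / lam k) \<cdot>\<^sub>v z k \<in> carrier_vec n"
      using \<open>K \<subseteq> I\<close> hull_subset by fastforce
  qed fact
  finally show "x \<in> vconvex hull (\<Union>k\<in>I. slice k)" .
qed

theorem vconvex_hull_UN_slice_eq_cone_sums: "vconvex hull (\<Union>k\<in>I. slice k) = cone_sums"
  using slice_subset_cone_sums
  by (intro equalityI hull_minimal cone_sums_vconvex cone_sums_subset_hull) blast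

end

section \<open>Homogenised polyhedra\<close>

definition homog_polyh :: "real mat \<Rightarrow> real vec \<Rightarrow> (real \<times> real vec) set" where
  "homog_polyh P p = {(l, x). x \<in> carrier_vec (dim_col P) \<and> vle (P *\<^sub>v x) (l \<cdot>\<^sub>v p)}"

lemma homog_polyh_lincomb:
  assumes "(l, x) \<in> homog_polyh P p" "(l', x') \<in> homog_polyh P p" "0 \<le> a" "0 \<le> b"
  shows "(a * l + b * l', a \<cdot>\<^sub>v x + b \<cdot>\<^sub>v x') \<in> homog_polyh P p"
proof -
  have x: "x \<in> carrier_vec (dim_col P)" "x' \<in> carrier_vec (dim_col P)"
    using assms(1,2) by (auto simp: homog_polyh_def)
  have "vle (a \<cdot>\<^sub>v (P *\<^sub>v x) + b \<cdot>\<^sub>v (P *\<^sub>v x')) (a \<cdot>\<^sub>v (l \<cdot>\<^sub>v p) + b \<cdot>\<^sub>v (l' \<cdot>\<^sub>v p))"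
    using assms by (intro vle_lincomb) (auto simp: homog_polyh_def)
  moreover have "a \<cdot>\<^sub>v (P *\<^sub>v x) + b \<cdot>\<^sub>v (P *\<^sub>v x') = P *\<^sub>v (a \<cdot>\<^sub>v x + b \<cdot>\<^sub>v x')"
    using x by (simp add: mult_mat_vec_lincomb)
  moreover have "a \<cdot>\<^sub>v (l \<cdot>\<^sub>v p) + b \<cdot>\<^sub>v (l' \<cdot>\<^sub>v p) = (a * l + b * l') \<cdot>\<^sub>v p"
    by (intro eq_vecI) (auto simp: algebra_simps)
  ultimately show ?thesis
    using x by (simp add: homog_polyh_def)
qed

lemma homog_polyh_smult:
  assumes "(l, x) \<in> homog_polyh P p" "0 \<le> c"
  shows "(c * l, c \<cdot>\<^sub>v x) \<in> homog_polyh P p"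
  using assms mult_mat_vec[OF carrier_mat_triv, of x P c]
  by (auto simp: homog_polyh_def vle_def mult.assoc intro!: mult_left_mono)

lemma homog_polyh_origin:
  "dim_vec p = dim_row P \<Longrightarrow> (0, 0\<^sub>v (dim_col P)) \<in> homog_polyh P p"
  by (simp add: homog_polyh_def vle_def)

lemma polyh_eq_homog_polyh_slice: "polyh P p = {x. (1, x) \<in> homog_polyh P p}"
  by (auto simp: polyh_def homog_polyh_def)

lemma smult_polyh_eq_homog_polyh_slice:
  assumes "0 < c"
  shows "(\<lambda>x. c \<cdot>\<^sub>v x) ` polyh P p = {y. (c, y) \<in> homog_polyh P p}"
proof (intro equalityI subsetI)
  fix y assume "y \<in> (\<lambda>x. c \<cdot>\<^sub>v x) ` polyh P p"
  then obtain x where "(1, x) \<in> homog_polyh P p" "y = c \<cdot>\<^sub>v x"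
    by (auto simp: polyh_eq_homog_polyh_slice)
  then show "y \<in> {y. (c, y) \<in> homog_polyh P p}"
    using homog_polyh_smult[of 1 x P p c] assms by simp
next
  fix y assume "y \<in> {y. (c, y) \<in> homog_polyh P p}"
  then have "(1, (1 / c) \<cdot>\<^sub>v y) \<in> homog_polyh P p"
    using homog_polyh_smult[of c y P p "1 / c"] assms by simp
  moreover have "y = c \<cdot>\<^sub>v ((1 / c) \<cdot>\<^sub>v y)"
    using assms by (intro eq_vecI) auto
  ultimately show "y \<in> (\<lambda>x. c \<cdot>\<^sub>v x) ` polyh P p"
    by (auto simp: polyh_eq_homog_polyh_slice)
qed

lemma homog_polyh_pointed:
  assumes bounded: "vbounded (polyh P p)" and zero: "0\<^sub>v (dim_col P) \<in> polyh P p"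
    and x: "(0, x) \<in> homog_polyh P p"
  shows "x = 0\<^sub>v (dim_col P)"
proof -
  have xc: "x \<in> carrier_vec (dim_col P)"
    using x by (simp add: homog_polyh_def)
  obtain R where R: "\<forall>y\<in>polyh P p. \<forall>i<dim_vec y. \<bar>y $ i\<bar> \<le> R"
    using bounded by (auto simp: vbounded_def)
  have ray: "t \<cdot>\<^sub>v x \<in> polyh P p" if "0 \<le> t" for t
  proof -
    have "(1 * 1 + t * 0, 1 \<cdot>\<^sub>v 0\<^sub>v (dim_col P) + t \<cdot>\<^sub>v x) \<in> homog_polyh P p"
      using zero x that by (intro homog_polyh_lincomb) (auto simp: polyh_eq_homog_polyh_slice)
    moreover have "1 \<cdot>\<^sub>v 0\<^sub>v (dim_col P) + t \<cdot>\<^sub>v x = t \<cdot>\<^sub>v x"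
      using xc by (intro eq_vecI) auto
    ultimately show ?thesis by (simp add: polyh_eq_homog_polyh_slice)
  qed
  show ?thesis
  proof (rule eq_vecI)
    fix i assume "i < dim_vec (0\<^sub>v (dim_col P))"
    then have i: "i < dim_col P" by simp
    show "x $ i = 0\<^sub>v (dim_col P) $ i"
    proof (rule ccontr)
      assume "x $ i \<noteq> 0\<^sub>v (dim_col P) $ i"
      then have "x $ i \<noteq> 0" using i by simp
      define t where "t = (\<bar>R\<bar> + 1) / \<bar>x $ i\<bar>"
      have "\<bar>(t \<cdot>\<^sub>v x) $ i\<bar> \<le> R"
        using R ray[of t] i xc by (auto simp: t_def)
      moreover have "\<bar>(t \<cdot>\<^sub>v x) $ i\<bar> = \<bar>R\<bar> + 1"
        using i xc \<open>x $ i \<noteq> 0\<close> by (simp add: t_def abs_mult)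
      ultimately show False by simp
    qed
  qed (use xc in simp)
qed

section \<open>Trajectories of the linear system\<close>

lemma invertible_mult_mat_vec_eq_zero_iff:
  fixes A :: "real mat"
  assumes A: "A \<in> carrier_mat n n" and "invertible_mat A" and z: "z \<in> carrier_vec n"
  shows "A *\<^sub>v z = 0\<^sub>v n \<longleftrightarrow> z = 0\<^sub>v n"
proof
  obtain P where PA: "P * A = 1\<^sub>m (dim_row P)" and AP: "A * P = 1\<^sub>m (dim_row A)"
    using \<open>invertible_mat A\<close> unfolding invertible_mat_def inverts_mat_def by blast
  have P: "P \<in> carrier_mat n n"
    using arg_cong[OF PA, of dim_col] arg_cong[OF AP, of dim_col] A by auto
  assume "A *\<^sub>v z = 0\<^sub>v n"
  have "z = (P * A) *\<^sub>v z" using PA P z by simp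
  also have "\<dots> = P *\<^sub>v (A *\<^sub>v z)" using P A z by (rule assoc_mult_mat_vec)
  finally show "z = 0\<^sub>v n" using P \<open>A *\<^sub>v z = 0\<^sub>v n\<close> by simp
qed (use A in simp)

lemma invertible_mult_pow_mat_vec_eq_zero_iff:
  fixes A :: "real mat"
  assumes A: "A \<in> carrier_mat n n" and "invertible_mat A"
  shows "z \<in> carrier_vec n \<Longrightarrow> (A ^\<^sub>m k) *\<^sub>v z = 0\<^sub>v n \<longleftrightarrow> z = 0\<^sub>v n"
proof (induction k arbitrary: z)
  case (Suc k)
  have "(A ^\<^sub>m Suc k) *\<^sub>v z = (A ^\<^sub>m k) *\<^sub>v (A *\<^sub>v z)"
    using A Suc.prems by (simp add: assoc_mult_mat_vec[of _ n n _ n])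
  then show ?case
    using Suc.IH[OF mult_mat_vec_carrier[OF A Suc.prems]]
      invertible_mult_mat_vec_eq_zero_iff[OF assms Suc.prems] by simp
qed (use A in simp)

lemma pow_mat_vec_carrier [simp]: "A \<in> carrier_mat n n \<Longrightarrow> (A ^\<^sub>m k) *\<^sub>v v \<in> carrier_vec n"
  by (intro carrier_vecI) simp

lemma traj_carrier [simp]: "A \<in> carrier_mat n n \<Longrightarrow> traj A B x u j \<in> carrier_vec n"
  unfolding traj_def by (intro carrier_vecI) simp

lemma traj_lincomb:
  assumes A: "A \<in> carrier_mat n n" and B: "B \<in> carrier_mat n m"
    and x: "x \<in> carrier_vec n" "y \<in> carrier_vec n"
    and u: "\<forall>i\<in>{1..j}. u i \<in> carrier_vec m" "\<forall>i\<in>{1..j}. w i \<in> carrier_vec m"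
  shows "traj A B (a \<cdot>\<^sub>v x + b \<cdot>\<^sub>v y) (\<lambda>i. a \<cdot>\<^sub>v u i + b \<cdot>\<^sub>v w i) j
     = a \<cdot>\<^sub>v traj A B x u j + b \<cdot>\<^sub>v traj A B y w j"
proof -
  let ?Bu = "\<lambda>u i. (A ^\<^sub>m (j - 1 - i)) *\<^sub>v (B *\<^sub>v u (j - i))"
  have "?Bu (\<lambda>i. a \<cdot>\<^sub>v u i + b \<cdot>\<^sub>v w i) i = a \<cdot>\<^sub>v ?Bu u i + b \<cdot>\<^sub>v ?Bu w i" if "i \<in> {0..<j}" for i
    using that A B u by (simp add: mult_mat_vec_lincomb)
  then have "vsum n (?Bu (\<lambda>i. a \<cdot>\<^sub>v u i + b \<cdot>\<^sub>v w i)) {0..<j}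
      = vsum n (\<lambda>i. a \<cdot>\<^sub>v ?Bu u i + b \<cdot>\<^sub>v ?Bu w i) {0..<j}"
    by (rule vsum_cong)
  also have "\<dots> = a \<cdot>\<^sub>v vsum n (?Bu u) {0..<j} + b \<cdot>\<^sub>v vsum n (?Bu w) {0..<j}"
    using A B u by (intro vsum_lincomb) auto
  finally have "vsum n (?Bu (\<lambda>i. a \<cdot>\<^sub>v u i + b \<cdot>\<^sub>v w i)) {0..<j}
      = a \<cdot>\<^sub>v vsum n (?Bu u) {0..<j} + b \<cdot>\<^sub>v vsum n (?Bu w) {0..<j}" .
  moreover have "(A ^\<^sub>m j) *\<^sub>v (a \<cdot>\<^sub>v x + b \<cdot>\<^sub>v y) = a \<cdot>\<^sub>v ((A ^\<^sub>m j) *\<^sub>v x) + b \<cdot>\<^sub>v ((A ^\<^sub>m j) *\<^sub>v y)"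
    using A x by (simp add: mult_mat_vec_lincomb)
  ultimately show ?thesis
    unfolding traj_def using A by (intro eq_vecI) (simp_all add: distrib_left)
qed

lemma traj_zero_input:
  assumes "A \<in> carrier_mat n n" "B \<in> carrier_mat n m" "x \<in> carrier_vec n"
    and "\<forall>i\<in>{1..j}. u i = 0\<^sub>v m"
  shows "traj A B x u j = (A ^\<^sub>m j) *\<^sub>v x"
proof -
  have "vsum n (\<lambda>i. (A ^\<^sub>m (j - 1 - i)) *\<^sub>v (B *\<^sub>v u (j - i))) {0..<j} = vsum n (\<lambda>i. 0\<^sub>v n) {0..<j}"
    using assms by (intro vsum_cong) auto
  then show ?thesis
    unfolding traj_def using assms by (intro eq_vecI) auto
qed

lemma mult_mat_vec_traj:
  fixes P :: "real mat"
  assumes A: "A \<in> carrier_mat n n" and B: "B \<in> carrier_mat n m" and P: "P \<in> carrier_mat r n"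
    and x: "x \<in> carrier_vec n" and u: "\<forall>i\<in>{1..j}. u i \<in> carrier_vec m"
  shows "P *\<^sub>v traj A B x u j = P *\<^sub>v ((A ^\<^sub>m j) *\<^sub>v x) +
     vsum r (\<lambda>i. P *\<^sub>v ((A ^\<^sub>m (j - 1 - i)) *\<^sub>v (B *\<^sub>v u (j - i)))) {0..<j}"
proof -
  have "P *\<^sub>v vsum n (\<lambda>i. (A ^\<^sub>m (j - 1 - i)) *\<^sub>v (B *\<^sub>v u (j - i))) {0..<j}
      = vsum r (\<lambda>i. P *\<^sub>v ((A ^\<^sub>m (j - 1 - i)) *\<^sub>v (B *\<^sub>v u (j - i)))) {0..<j}"
    using A B u by (intro mult_mat_vec_vsum[OF P]) auto
  then show ?thesis
    unfolding traj_def using A x by (subst mult_add_distrib_mat_vec[OF P]) auto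
qed

section \<open>The cones over the sets Omega_k\<close>

definition Omega_k_cone :: "real mat \<Rightarrow> real mat \<Rightarrow> real mat \<Rightarrow> real vec \<Rightarrow> real mat \<Rightarrow> real vec
    \<Rightarrow> real mat \<Rightarrow> real vec \<Rightarrow> real \<Rightarrow> nat \<Rightarrow> (real \<times> real vec) set" where
  "Omega_k_cone A B H h F f G g \<alpha> k =
    {(l, x). (l, x) \<in> homog_polyh F f \<and> (\<exists>u. (\<forall>i\<in>{1..k}. (l, u i) \<in> homog_polyh G g) \<and>
        (\<alpha> * l, traj A B x u k) \<in> homog_polyh H h \<and>
        (\<forall>j\<in>{1..k}. (l, traj A B x u j) \<in> homog_polyh F f))}"

lemma Omega_k_eq_Omega_k_cone_slice:
  assumes "0 < \<alpha>"
  shows "Omega_k A B H h F f G g \<alpha> k = {x. (1, x) \<in> Omega_k_cone A B H h F f G g \<alpha> k}"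
  unfolding Omega_k_def smult_polyh_eq_homog_polyh_slice[OF assms]
  unfolding Omega_k_cone_def polyh_eq_homog_polyh_slice by simp

lemma Omega_k_cone_carrier:
  "F \<in> carrier_mat nf n \<Longrightarrow> (l, x) \<in> Omega_k_cone A B H h F f G g \<alpha> k \<Longrightarrow> x \<in> carrier_vec n"
  by (simp add: Omega_k_cone_def homog_polyh_def)

lemma Omega_k_cone_origin:
  assumes "A \<in> carrier_mat n n" "B \<in> carrier_mat n m" "H \<in> carrier_mat nh n" "h \<in> carrier_vec nh"
    "F \<in> carrier_mat nf n" "f \<in> carrier_vec nf" "G \<in> carrier_mat ng m" "g \<in> carrier_vec ng"
  shows "(0, 0\<^sub>v n) \<in> Omega_k_cone A B H h F f G g \<alpha> k"
proof -
  have "traj A B (0\<^sub>v n) (\<lambda>i. 0\<^sub>v m) j = 0\<^sub>v n" for j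
    using assms by (simp add: traj_zero_input)
  then show ?thesis
    using assms homog_polyh_origin[of h H] homog_polyh_origin[of f F] homog_polyh_origin[of g G]
    unfolding Omega_k_cone_def by auto
qed

lemma Omega_k_cone_lincomb:
  assumes A: "A \<in> carrier_mat n n" and B: "B \<in> carrier_mat n m"
    and F: "F \<in> carrier_mat nf n" and G: "G \<in> carrier_mat ng m"
    and x: "(l, x) \<in> Omega_k_cone A B H h F f G g \<alpha> k"
    and x': "(l', x') \<in> Omega_k_cone A B H h F f G g \<alpha> k"
    and ab: "0 \<le> a" "0 \<le> b"
  shows "(a * l + b * l', a \<cdot>\<^sub>v x + b \<cdot>\<^sub>v x') \<in> Omega_k_cone A B H h F f G g \<alpha> k"
proof -
  obtain u u' where
    u: "(l, x) \<in> homog_polyh F f" "\<forall>i\<in>{1..k}. (l, u i) \<in> homog_polyh G g"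
      "(\<alpha> * l, traj A B x u k) \<in> homog_polyh H h"
      "\<forall>j\<in>{1..k}. (l, traj A B x u j) \<in> homog_polyh F f" and
    u': "(l', x') \<in> homog_polyh F f" "\<forall>i\<in>{1..k}. (l', u' i) \<in> homog_polyh G g"
      "(\<alpha> * l', traj A B x' u' k) \<in> homog_polyh H h"
      "\<forall>j\<in>{1..k}. (l', traj A B x' u' j) \<in> homog_polyh F f"
    using x x' unfolding Omega_k_cone_def by blast
  define w where "w = (\<lambda>i. a \<cdot>\<^sub>v u i + b \<cdot>\<^sub>v u' i)"
  have "x \<in> carrier_vec n" "x' \<in> carrier_vec n"
    "\<forall>i\<in>{1..k}. u i \<in> carrier_vec m" "\<forall>i\<in>{1..k}. u' i \<in> carrier_vec m"
    using u(1,2) u'(1,2) F G by (auto simp: homog_polyh_def)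
  then have traj: "traj A B (a \<cdot>\<^sub>v x + b \<cdot>\<^sub>v x') w j
      = a \<cdot>\<^sub>v traj A B x u j + b \<cdot>\<^sub>v traj A B x' u' j" if "j \<le> k" for j
    unfolding w_def using A B that by (intro traj_lincomb) auto
  have "(a * l + b * l', a \<cdot>\<^sub>v x + b \<cdot>\<^sub>v x') \<in> homog_polyh F f"
    using u(1) u'(1) ab by (rule homog_polyh_lincomb)
  moreover have "\<forall>i\<in>{1..k}. (a * l + b * l', w i) \<in> homog_polyh G g"
    using u(2) u'(2) ab by (simp add: w_def homog_polyh_lincomb)
  moreover have "(\<alpha> * (a * l + b * l'), traj A B (a \<cdot>\<^sub>v x + b \<cdot>\<^sub>v x') w k) \<in> homog_polyh H h"
    using homog_polyh_lincomb[OF u(3) u'(3) ab] traj[of k] by (simp add: algebra_simps)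
  moreover have "\<forall>j\<in>{1..k}. (a * l + b * l', traj A B (a \<cdot>\<^sub>v x + b \<cdot>\<^sub>v x') w j) \<in> homog_polyh F f"
    using u(4) u'(4) ab traj by (simp add: homog_polyh_lincomb)
  ultimately show ?thesis
    unfolding Omega_k_cone_def by blast
qed

lemma Omega_k_cone_pointed:
  assumes A: "A \<in> carrier_mat n n" "invertible_mat A" and B: "B \<in> carrier_mat n m"
    and H: "H \<in> carrier_mat nh n" and F: "F \<in> carrier_mat nf n" and G: "G \<in> carrier_mat ng m"
    and Omega: "vbounded (polyh H h)" "0\<^sub>v n \<in> polyh H h"
    and U: "vbounded (polyh G g)" "0\<^sub>v m \<in> polyh G g"
    and x: "(0, x) \<in> Omega_k_cone A B H h F f G g \<alpha> k"
  shows "x = 0\<^sub>v n"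
proof -
  obtain u where u: "\<forall>i\<in>{1..k}. (0, u i) \<in> homog_polyh G g"
    and traj: "(0, traj A B x u k) \<in> homog_polyh H h"
    using x unfolding Omega_k_cone_def by (auto simp: homog_polyh_def)
  have "\<forall>i\<in>{1..k}. u i = 0\<^sub>v m"
    using u homog_polyh_pointed[of G g] U G by auto
  then have "traj A B x u k = (A ^\<^sub>m k) *\<^sub>v x"
    using A B Omega_k_cone_carrier[OF F x] by (intro traj_zero_input)
  with traj have "(A ^\<^sub>m k) *\<^sub>v x = 0\<^sub>v n"
    using homog_polyh_pointed[of H h] Omega H by auto
  then show ?thesis
    using invertible_mult_pow_mat_vec_eq_zero_iff[OF A Omega_k_cone_carrier[OF F x]] by simp
qed

lemma mem_Omega_k_cone_iff:
  assumes A: "A \<in> carrier_mat n n" and B: "B \<in> carrier_mat n m" and H: "H \<in> carrier_mat nh n"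
    and F: "F \<in> carrier_mat nf n" and G: "G \<in> carrier_mat ng m"
  shows "(l, z) \<in> Omega_k_cone A B H h F f G g \<alpha> k \<longleftrightarrow> z \<in> carrier_vec n \<and>
    (\<exists>u. (\<forall>i\<in>{1..k}. u i \<in> carrier_vec m) \<and>
      vle (H *\<^sub>v ((A ^\<^sub>m k) *\<^sub>v z) +
          vsum nh (\<lambda>i. H *\<^sub>v ((A ^\<^sub>m (k - 1 - i)) *\<^sub>v (B *\<^sub>v u (k - i)))) {0..<k})
        ((\<alpha> * l) \<cdot>\<^sub>v h) \<and>
      (\<forall>j\<in>{1..k}. vle (F *\<^sub>v ((A ^\<^sub>m j) *\<^sub>v z) +
          vsum nf (\<lambda>i. F *\<^sub>v ((A ^\<^sub>m (j - 1 - i)) *\<^sub>v (B *\<^sub>v u (j - i)))) {0..<j})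
        (l \<cdot>\<^sub>v f)) \<and>
      vle (F *\<^sub>v z) (l \<cdot>\<^sub>v f) \<and>
      (\<forall>i\<in>{1..k}. vle (G *\<^sub>v u i) (l \<cdot>\<^sub>v g)))"
    (is "_ \<longleftrightarrow> z \<in> carrier_vec n \<and> (\<exists>u. ?expanded u)")
proof -
  have "(\<forall>i\<in>{1..k}. (l, u i) \<in> homog_polyh G g) \<and> (\<alpha> * l, traj A B z u k) \<in> homog_polyh H h \<and>
      (\<forall>j\<in>{1..k}. (l, traj A B z u j) \<in> homog_polyh F f) \<and> (l, z) \<in> homog_polyh F f
    \<longleftrightarrow> ?expanded u" if z: "z \<in> carrier_vec n" for u
  proof (cases "\<forall>i\<in>{1..k}. u i \<in> carrier_vec m")
    case True
    then have "\<forall>i\<in>{1..j}. u i \<in> carrier_vec m" if "j \<le> k" for j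
      using that by auto
    then show ?thesis
      using True A B H F G z
      by (auto simp: homog_polyh_def mult_mat_vec_traj[OF A B H z] mult_mat_vec_traj[OF A B F z])
  next
    case False
    then show ?thesis using G by (auto simp: homog_polyh_def)
  qed
  moreover have "(l, z) \<in> homog_polyh F f \<Longrightarrow> z \<in> carrier_vec n"
    using F by (simp add: homog_polyh_def)
  ultimately show ?thesis
    unfolding Omega_k_cone_def by blast
qed

theorem theorem3:
  fixes A B H F G :: "real mat" and h f g :: "real vec" and n m nh nf ng N :: nat
    and \<beta> \<alpha> :: real
  assumes A: "A \<in> carrier_mat n n" and Ainv: "invertible_mat A"
    and B: "B \<in> carrier_mat n m" and N: "N \<ge> 1"
    and H: "H \<in> carrier_mat nh n" and h: "h \<in> carrier_vec nh"
    and F: "F \<in> carrier_mat nf n" and f: "f \<in> carrier_vec nf"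
    and G: "G \<in> carrier_mat ng m" and g: "g \<in> carrier_vec ng"
    and Omega_bdd: "vbounded (polyh H h)" and U_bdd: "vbounded (polyh G g)"
    and zO: "0\<^sub>v n \<in> polyh H h" and zX: "0\<^sub>v n \<in> polyh F f" and zU: "0\<^sub>v m \<in> polyh G g"
    and beta: "\<beta> \<in> lp_feasible A B H h F f G g N" and beta_min: "\<forall>\<gamma>\<in>lp_feasible A B H h F f G g N. \<beta> \<le> \<gamma>" and beta_pos: "\<beta> > 0"
    and alpha: "\<alpha> = inverse \<beta>"
  shows "vconvex hull (\<Union>k\<in>{1..N}. Omega_k A B H h F f G g \<alpha> k) =
    {x \<in> carrier_vec n. \<exists>z v lam.
        (\<forall>k\<in>{1..N}. z k \<in> carrier_vec n) \<and>
        (\<forall>k\<in>{1..N}. \<forall>i\<in>{1..k}. v k i \<in> carrier_vec m) \<and>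
        x = vsum n z {1..N} \<and>
        (\<forall>k\<in>{1..N}. vle (H *\<^sub>v ((A ^\<^sub>m k) *\<^sub>v z k) +
             vsum nh (\<lambda>i. H *\<^sub>v ((A ^\<^sub>m (k - 1 - i)) *\<^sub>v (B *\<^sub>v v k (k - i)))) {0..<k})
           ((\<alpha> * lam k) \<cdot>\<^sub>v h)) \<and>
        (\<forall>k\<in>{1..N}. \<forall>j\<in>{1..k}. vle (F *\<^sub>v ((A ^\<^sub>m j) *\<^sub>v z k) +
             vsum nf (\<lambda>i. F *\<^sub>v ((A ^\<^sub>m (j - 1 - i)) *\<^sub>v (B *\<^sub>v v k (j - i)))) {0..<j})
           (lam k \<cdot>\<^sub>v f)) \<and>
        (\<forall>k\<in>{1..N}. vle (F *\<^sub>v z k) (lam k \<cdot>\<^sub>v f)) \<and>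
        (\<forall>k\<in>{1..N}. \<forall>i\<in>{1..k}. vle (G *\<^sub>v v k i) (lam k \<cdot>\<^sub>v g)) \<and>
        (\<forall>k\<in>{1..N}. lam k \<ge> 0) \<and> (\<Sum>k\<in>{1..N}. lam k) = 1}"
proof -
  have "0 < \<alpha>" using alpha beta_pos by simp
  interpret vcone_family n "Omega_k_cone A B H h F f G g \<alpha>" "{1..N}"
  proof
    show "(0, 0\<^sub>v n) \<in> Omega_k_cone A B H h F f G g \<alpha> k" for k
      by (rule Omega_k_cone_origin[OF A B H h F f G g])
  qed (auto intro: Omega_k_cone_carrier[OF F] Omega_k_cone_lincomb[OF A B F G]
      Omega_k_cone_pointed[OF A Ainv B H F G Omega_bdd zO U_bdd zU])
  have "vconvex hull (\<Union>k\<in>{1..N}. Omega_k A B H h F f G g \<alpha> k) = cone_sums"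
    using vconvex_hull_UN_slice_eq_cone_sums
    by (simp add: slice_def Omega_k_eq_Omega_k_cone_slice[OF \<open>0 < \<alpha>\<close>])
  then show ?thesis
    unfolding cone_sums_def mem_Omega_k_cone_iff[OF A B H F G] ball_conj_distrib bchoice_iff
    by auto
qed

end
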